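(* Let $\ell,d\ge0$ be integers and $a=(a_1,\dots,a_\ell)\in\{1,\dots,n\}^\ell$. In $W_\eta(2n)$ the following two elements are equal: (i) the sum of all degree-$d$ mixed $x\partial$-monomials indexed by $a$, i.e. $\sum_{T}z_T^{a_1}z_T^{a_2}\cdots z_T^{a_\ell}$, where $T$ runs over subsets of $\{1,\dots,\ell\}$ with $\ell-2|T|=d$, and $z_T^{a_i}=\partial^{a_i}$ if $i\in T$, $z_T^{a_i}=x^{a_i}$ if $i\notin T$; (ii) the sum of all distinct degree-$d$ ordered $\eta x\partial$-monomials indexed by permutations of $a$, i.e. $$\sum_{(M,X)}\ \prod_{\{i,j\}\in M}\eta^{a_ia_j}\prod_{k\in X}x^{a_k}\prod_{k\in U_M\setminus X}\partial^{a_k},$$ where $M$ runs over all sets of pairwise disjoint 2-element subsets of $\{1,\dots,\ell\}$, $U_M$ is the set of positions not covered by $M$, and $X$ runs over subsets of $U_M$ with $|X|-|U_M\setminus X|=d$ (within each product the $x$-factors are written before the $\partial$-factors).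
   Context: $W_\eta(2n)$ is the unital associative $\mathbb{C}$-algebra generated by $x^a,\partial_a$ ($a=1,\dots,n$) and central elements $\eta_{ab},\eta^{ab}$ subject to $x^ax^b=x^bx^a$, $\partial_a\partial_b=\partial_b\partial_a$, $\partial_ax^b-x^b\partial_a=\delta_a^b$, $\eta_{ab}=\eta_{ba}$, $\sum_b\eta_{ab}\eta^{bc}=\delta_a^c$. Put $\partial^a=\sum_b\eta^{ab}\partial_b$; then $\partial^a\partial^b=\partial^b\partial^a$ and $\partial^ax^b-x^b\partial^a=\eta^{ab}$. Grading: $\deg x^a=1$, $\deg\partial_a=\deg\partial^a=-1$, $\deg\eta=0$. In the paper's terminology an ordered $\eta x\partial$-monomial indexed by $b=(b_1,\dots,b_\ell)$ is $(\eta^{b_1b_2}\cdots\eta^{b_{2r-1}b_{2r}})(x^{b_{2r+1}}\cdots x^{b_{2r+s}})(\partial^{b_{2r+s+1}}\cdots\partial^{b_{2r+s+t}})$, of degree $s-t$; "distinct" means terms are counted once up to the symmetry $\eta^{ij}=\eta^{ji}$ and reordering of commuting factors, but positions in $a$ are regarded as distinct even if their values coincide; sum (ii) is the explicit sum written in the claim. *)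

theory Defs
  imports Main
begin

text \<open>Presentation of W_eta(2n): generators x^a, d_a (lower derivative), central eta_ab, eta^ab,
 indices a in {1..n}. A statement holding for every unital ring with elements satisfying
 the defining relations is (by the universal property) the statement in W_eta(2n).\<close>

definition weyl_rels ::
  "nat \<Rightarrow> (nat \<Rightarrow> 'a::ring_1) \<Rightarrow> (nat \<Rightarrow> 'a) \<Rightarrow> (nat \<Rightarrow> nat \<Rightarrow> 'a) \<Rightarrow> (nat \<Rightarrow> nat \<Rightarrow> 'a) \<Rightarrow> bool"
  where "weyl_rels n x dl etalo etaup \<longleftrightarrow>
    (\<forall>a\<in>{1..n}. \<forall>b\<in>{1..n}.
        x a * x b = x b * x a \<and>
        dl a * dl b = dl b * dl a \<and>
        dl a * x b - x b * dl a = (if a = b then 1 else 0) \<and>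
        etalo a b = etalo b a) \<and>
    (\<forall>a\<in>{1..n}. \<forall>c\<in>{1..n}. (\<Sum>b=1..n. etalo a b * etaup b c) = (if a = c then 1 else 0)) \<and>
    \<comment> \<open>centrality of the eta's: they commute with all generators\<close>
    (\<forall>a\<in>{1..n}. \<forall>b\<in>{1..n}. \<forall>c\<in>{1..n}.
        (\<forall>g\<in>{etalo a b, etaup a b}.
           g * x c = x c * g \<and> g * dl c = dl c * g \<and>
           (\<forall>e\<in>{1..n}. g * etalo c e = etalo c e * g \<and> g * etaup c e = etaup c e * g)))"

definition dup :: "nat \<Rightarrow> (nat \<Rightarrow> 'a::ring_1) \<Rightarrow> (nat \<Rightarrow> nat \<Rightarrow> 'a) \<Rightarrow> nat \<Rightarrow> 'a"
  where "dup n dl etaup a = (\<Sum>b=1..n. etaup a b * dl b)"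

text \<open>Product over a finite set of commuting factors, in some (arbitrary) order.\<close>
definition cprod :: "('b \<Rightarrow> 'a::monoid_mult) \<Rightarrow> 'b set \<Rightarrow> 'a"
  where "cprod f S = prod_list (map f (SOME xs. distinct xs \<and> set xs = S))"

definition oprod :: "(nat \<Rightarrow> 'a::monoid_mult) \<Rightarrow> nat set \<Rightarrow> 'a"
  where "oprod f S = prod_list (map f (sorted_list_of_set S))"

definition pmatching :: "nat \<Rightarrow> nat set set \<Rightarrow> bool"
  where "pmatching l M \<longleftrightarrow>
     (\<forall>p\<in>M. p \<subseteq> {0..<l} \<and> card p = 2) \<and> (\<forall>p\<in>M. \<forall>q\<in>M. p \<noteq> q \<longrightarrow> p \<inter> q = {})"

definition sum_i ::
  "nat \<Rightarrow> (nat \<Rightarrow> 'a::ring_1) \<Rightarrow> (nat \<Rightarrow> 'a) \<Rightarrow> (nat \<Rightarrow> nat \<Rightarrow> 'a) \<Rightarrow> nat list \<Rightarrow> nat \<Rightarrow> 'a"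
  where "sum_i n x dl etaup a d =
    (\<Sum>T\<in>{T. T \<subseteq> {0..<length a} \<and> int (length a) - 2 * int (card T) = int d}.
       prod_list (map (\<lambda>i. if i \<in> T then dup n dl etaup (a!i) else x (a!i)) [0..<length a]))"

definition sum_ii ::
  "nat \<Rightarrow> (nat \<Rightarrow> 'a::ring_1) \<Rightarrow> (nat \<Rightarrow> 'a) \<Rightarrow> (nat \<Rightarrow> nat \<Rightarrow> 'a) \<Rightarrow> nat list \<Rightarrow> nat \<Rightarrow> 'a"
  where "sum_ii n x dl etaup a d =
    (\<Sum>(M,X)\<in>{(M,X). pmatching (length a) M \<and> X \<subseteq> {0..<length a} - \<Union>M \<and>
                int (card X) - int (card (({0..<length a} - \<Union>M) - X)) = int d}.
       cprod (\<lambda>p. etaup (a!Min p) (a!Max p)) M *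
       oprod (\<lambda>k. x (a!k)) X *
       oprod (\<lambda>k. dup n dl etaup (a!k)) (({0..<length a} - \<Union>M) - X))"

end

theory Submission
  imports Defs
begin

text \<open>Both sides satisfy the recursion S(a c, e) = S(a, e - 1) x^c + S(a, e + 1) \<partial>^c in the
  last letter c of a, with S([], e) = [e = 0]. For sum (i) this is the choice of the last factor.
  In sum (ii) the last position is an x-factor, a \<partial>-factor, or paired with an earlier unpaired
  \<partial>-position k; the paired terms are exactly the contractions \<eta>^(a_k c) produced when x^c,
  appended to an ordered monomial, is commuted leftwards past its \<partial>-factors by
  \<partial>^i x^k = x^k \<partial>^i + \<eta>^(i k), \<eta> being central. No other relation is used, so the argument
  is carried out for an abstract contraction g between letters u and v.\<close>

section \<open>Products of commuting factors\<close>

lemma prod_list_map_commute: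
  fixes z :: "'a::monoid_mult"
  assumes "\<And>u. u \<in> set xs \<Longrightarrow> z * f u = f u * z"
  shows "z * prod_list (map f xs) = prod_list (map f xs) * z"
  using assms by (induction xs) (simp_all add: mult.assoc[symmetric], simp add: mult.assoc)

lemma prod_list_map_eq_if_commuting:
  fixes f :: "'b \<Rightarrow> 'a::monoid_mult"
  assumes "distinct xs" "distinct ys" "set xs = set ys"
    and "\<And>u v. u \<in> set xs \<Longrightarrow> v \<in> set xs \<Longrightarrow> f u * f v = f v * f u"
  shows "prod_list (map f xs) = prod_list (map f ys)"
  using assms
proof (induction xs arbitrary: ys)
  case Nil
  then show ?case by simp
next
  case (Cons u xs)
  then obtain ys1 ys2 where ys: "ys = ys1 @ u # ys2"
    by (metis list.set_intros(1) split_list)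
  have "set xs = set ys - {u}"
    using Cons.prems(1,3) by (metis Diff_insert_absorb distinct.simps(2) list.simps(15))
  moreover have "set (ys1 @ ys2) = set ys - {u}"
    using Cons.prems(2) ys by auto
  moreover have "distinct (ys1 @ ys2)"
    using Cons.prems(2) ys by simp
  ultimately
  have IH: "prod_list (map f xs) = prod_list (map f (ys1 @ ys2))"
    using Cons.prems by (intro Cons.IH) auto
  have "f u * prod_list (map f ys1) = prod_list (map f ys1) * f u"
    using Cons.prems ys by (intro prod_list_map_commute) auto
  then have "prod_list (map f ys) = f u * prod_list (map f (ys1 @ ys2))"
    by (simp add: ys mult.assoc[symmetric])
  then show ?case
    using IH by simp
qed

lemma cprod_enumeration:
  "finite S \<Longrightarrow>
    distinct (SOME xs. distinct xs \<and> set xs = S) \<and> set (SOME xs. distinct xs \<and> set xs = S) = S"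
  by (rule someI_ex) (metis finite_distinct_list)

lemma cprod_eq_prod_list:
  fixes f :: "'b \<Rightarrow> 'a::monoid_mult"
  assumes "distinct xs"
    and "\<And>u v. u \<in> set xs \<Longrightarrow> v \<in> set xs \<Longrightarrow> f u * f v = f v * f u"
  shows "cprod f (set xs) = prod_list (map f xs)"
  unfolding cprod_def
  using cprod_enumeration[of "set xs"] assms by (intro prod_list_map_eq_if_commuting) auto

lemma cprod_empty [simp]: "cprod f {} = 1"
  using cprod_eq_prod_list[of "[]" f] by simp

lemma cprod_insert:
  fixes f :: "'b \<Rightarrow> 'a::monoid_mult"
  assumes "finite S" "p \<notin> S"
    and "\<And>u v. u \<in> insert p S \<Longrightarrow> v \<in> insert p S \<Longrightarrow> f u * f v = f v * f u"
  shows "cprod f (insert p S) = f p * cprod f S"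
proof -
  obtain ys where ys: "distinct ys" "set ys = S"
    using assms(1) finite_distinct_list by blast
  have "cprod f (insert p S) = prod_list (map f (p # ys))"
    using cprod_eq_prod_list[of "p # ys" f] ys assms(2,3) by simp
  also have "\<dots> = f p * cprod f S"
    using cprod_eq_prod_list[of ys f] ys assms(3) by simp
  finally show ?thesis .
qed

lemma cprod_cong:
  assumes "finite S" "\<And>u. u \<in> S \<Longrightarrow> f u = g u"
  shows "cprod f S = cprod g S"
proof -
  let ?xs = "SOME xs. distinct xs \<and> set xs = S"
  have "map f ?xs = map g ?xs"
    using cprod_enumeration[OF assms(1)] assms(2) by (intro map_cong) auto
  then show ?thesis
    unfolding cprod_def by (rule arg_cong)
qed

lemma cprod_commute:
  fixes z :: "'a::monoid_mult"
  assumes "finite S" "\<And>u. u \<in> S \<Longrightarrow> z * f u = f u * z"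
  shows "z * cprod f S = cprod f S * z"
  unfolding cprod_def using cprod_enumeration[OF assms(1)] assms(2)
  by (intro prod_list_map_commute) auto

lemma oprod_cong: "finite S \<Longrightarrow> (\<And>u. u \<in> S \<Longrightarrow> f u = g u) \<Longrightarrow> oprod f S = oprod g S"
  unfolding oprod_def by (metis map_eq_conv set_sorted_list_of_set)

lemma oprod_commute:
  fixes z :: "'a::monoid_mult"
  assumes "finite S" "\<And>u. u \<in> S \<Longrightarrow> z * f u = f u * z"
  shows "z * oprod f S = oprod f S * z"
  unfolding oprod_def using assms by (intro prod_list_map_commute) auto

lemma oprod_insert_greatest:
  fixes S :: "nat set"
  assumes "finite S" "\<And>u. u \<in> S \<Longrightarrow> u < m"
  shows "oprod f (insert m S) = oprod f S * f m"
proof -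
  have "m \<notin> S"
    using assms(2) by blast
  then show ?thesis
    using assms by (simp add: oprod_def sorted_list_of_set_insert sorted_insort_is_snoc less_imp_le)
qed

lemma prod_list_map_mult_commutator:
  fixes g e :: "'b \<Rightarrow> 'a::ring_1"
  assumes "distinct ks"
    and "\<And>k. k \<in> set ks \<Longrightarrow> g k * y = y * g k + e k"
    and "\<And>k j. k \<in> set ks \<Longrightarrow> j \<in> set ks \<Longrightarrow> e k * g j = g j * e k"
  shows "prod_list (map g ks) * y
    = y * prod_list (map g ks) + (\<Sum>k\<in>set ks. e k * prod_list (map g (remove1 k ks)))"
  using assms
proof (induction ks)
  case Nil
  then show ?case by simp
next
  case (Cons u ks)
  let ?P = "prod_list (map g ks)"
  have u: "u \<notin> set ks"
    using Cons.prems(1) by simp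
  have IH: "?P * y = y * ?P + (\<Sum>k\<in>set ks. e k * prod_list (map g (remove1 k ks)))"
    using Cons by simp
  let ?Q = "\<lambda>k. prod_list (map g (remove1 k (u # ks)))"
  have "g u * (e k * prod_list (map g (remove1 k ks))) = e k * ?Q k" if "k \<in> set ks" for k
    using that Cons.prems by (auto simp: mult.assoc[symmetric])
  then have sum: "g u * (\<Sum>k\<in>set ks. e k * prod_list (map g (remove1 k ks)))
      = (\<Sum>k\<in>set ks. e k * ?Q k)"
    by (simp add: sum_distrib_left)
  have "prod_list (map g (u # ks)) * y = g u * (?P * y)"
    by (simp add: mult.assoc)
  also have "\<dots> = (g u * y) * ?P + (\<Sum>k\<in>set ks. e k * ?Q k)"
    by (simp add: IH distrib_left sum mult.assoc)
  also have "\<dots> = y * prod_list (map g (u # ks)) + e u * ?Q u + (\<Sum>k\<in>set ks. e k * ?Q k)"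
    using Cons.prems(2) by (simp add: distrib_right mult.assoc)
  also have "\<dots> = y * prod_list (map g (u # ks)) + (\<Sum>k\<in>set (u # ks). e k * ?Q k)"
    by (simp only: list.set(2) add.assoc sum.insert[OF finite_set u])
  finally show ?case .
qed

lemma oprod_mult_commutator:
  fixes g e :: "nat \<Rightarrow> 'a::ring_1"
  assumes "finite S"
    and "\<And>k. k \<in> S \<Longrightarrow> g k * y = y * g k + e k"
    and "\<And>k j. k \<in> S \<Longrightarrow> j \<in> S \<Longrightarrow> e k * g j = g j * e k"
  shows "oprod g S * y = y * oprod g S + (\<Sum>k\<in>S. e k * oprod g (S - {k}))"
proof -
  let ?ks = "sorted_list_of_set S"
  have "prod_list (map g ?ks) * y
      = y * prod_list (map g ?ks) + (\<Sum>k\<in>set ?ks. e k * prod_list (map g (remove1 k ?ks)))"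
    by (rule prod_list_map_mult_commutator) (use assms in auto)
  moreover have "remove1 k ?ks = sorted_list_of_set (S - {k})" for k
    using assms(1) by (rule sorted_list_of_set_remove[symmetric])
  ultimately show ?thesis
    unfolding oprod_def set_sorted_list_of_set[OF assms(1)] by presburger
qed

section \<open>Index sets\<close>

lemma pmatching_Union_subset: "pmatching l M \<Longrightarrow> \<Union>M \<subseteq> {0..<l}"
  by (auto simp: pmatching_def)

lemma pmatching_finite: "pmatching l M \<Longrightarrow> finite M"
  using pmatching_Union_subset by (metis finite_UnionD finite_atLeastLessThan finite_subset)

lemma pmatching_Min_Max:
  assumes "pmatching l M" "p \<in> M"
  shows "Min p < l \<and> Max p < l"
proof -
  have p: "p \<subseteq> {0..<l}" "card p = 2"
    using assms by (auto simp: pmatching_def)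
  then have "finite p" "p \<noteq> {}"
    by (auto intro: finite_subset)
  then show ?thesis
    using p(1) Min_in Max_in by fastforce
qed

lemma pmatching_Suc_iff:
  assumes "l \<notin> \<Union>M"
  shows "pmatching (Suc l) M \<longleftrightarrow> pmatching l M"
proof -
  have "p \<subseteq> {0..<l}" if "p \<in> M" "p \<subseteq> {0..<Suc l}" for p
    using assms that by (fastforce simp: less_Suc_eq)
  moreover have "p \<subseteq> {0..<Suc l}" if "p \<subseteq> {0..<l}" for p
    using that by auto
  ultimately show ?thesis
    unfolding pmatching_def by meson
qed

lemma pmatching_insert:
  assumes "pmatching l M" "k < l" "k \<notin> \<Union>M"
  shows "pmatching (Suc l) (insert {k, l} M)"
proof -
  have "l \<notin> \<Union>M"
    using pmatching_Union_subset[OF assms(1)] by auto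
  then have "{k, l} \<inter> q = {}" "q \<inter> {k, l} = {}" if "q \<in> M" for q
    using assms(3) that by blast+
  moreover have "{k, l} \<subseteq> {0..<Suc l}" "card {k, l} = 2"
    using assms(2) by auto
  moreover have "p \<subseteq> {0..<Suc l}" if "p \<in> M" for p
    using assms(1) that unfolding pmatching_def by fastforce
  ultimately show ?thesis
    using assms(1) unfolding pmatching_def by (metis insert_iff)
qed

lemma pmatching_Suc_elim:
  assumes "pmatching (Suc l) M'" "l \<in> \<Union>M'"
  obtains k M where "M' = insert {k, l} M" "k < l" "k \<notin> \<Union>M" "pmatching l M"
proof -
  obtain p where p: "p \<in> M'" "l \<in> p"
    using assms(2) by blast
  then obtain k where k: "p = {k, l}" "k \<noteq> l"
    using assms(1) unfolding pmatching_def by (metis card_2_iff insert_commute insertE singletonD)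
  define M where "M = M' - {p}"
  have "q \<inter> p = {}" if "q \<in> M" for q
    using assms(1) p that unfolding pmatching_def M_def by blast
  then have "k \<notin> \<Union>M" "l \<notin> \<Union>M"
    using k by blast+
  moreover have "k < l"
    using assms(1) p k unfolding pmatching_def by fastforce
  moreover have "pmatching (Suc l) M"
    using assms(1) unfolding pmatching_def M_def by blast
  ultimately show ?thesis
    using that[of k M] p k pmatching_Suc_iff unfolding M_def by blast
qed

definition mixed_indices :: "nat \<Rightarrow> int \<Rightarrow> nat set set" where
  "mixed_indices l e = {T. T \<subseteq> {0..<l} \<and> int l - 2 * int (card T) = e}"

lemma finite_mixed_indices: "finite (mixed_indices l e)"
  unfolding mixed_indices_def by (rule finite_subset[of _ "Pow {0..<l}"]) auto

lemma mixed_indices_Suc: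
  "mixed_indices (Suc l) e = mixed_indices l (e - 1) \<union> insert l ` mixed_indices l (e + 1)"
proof (intro equalityI subsetI)
  fix T assume T: "T \<in> mixed_indices (Suc l) e"
  then have sub: "T \<subseteq> {0..<Suc l}" and deg: "int (Suc l) - 2 * int (card T) = e"
    by (simp_all add: mixed_indices_def)
  then have fin: "finite T"
    using finite_subset by blast
  show "T \<in> mixed_indices l (e - 1) \<union> insert l ` mixed_indices l (e + 1)"
  proof (cases "l \<in> T")
    case True
    have "T - {l} \<subseteq> {0..<l}"
      using sub by auto
    moreover have "int l - 2 * int (card (T - {l})) = e + 1"
      using deg card.remove[OF fin True] by simp
    ultimately have "T - {l} \<in> mixed_indices l (e + 1)"
      by (simp add: mixed_indices_def)
    moreover have "T = insert l (T - {l})"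
      using True by blast
    ultimately show ?thesis by blast
  next
    case False
    then have "T \<subseteq> {0..<l}"
      using sub by (auto simp: less_Suc_eq)
    then show ?thesis
      using deg by (simp add: mixed_indices_def)
  qed
next
  fix T assume "T \<in> mixed_indices l (e - 1) \<union> insert l ` mixed_indices l (e + 1)"
  then consider "T \<in> mixed_indices l (e - 1)" | T' where "T = insert l T'" "T' \<in> mixed_indices l (e + 1)"
    by blast
  then show "T \<in> mixed_indices (Suc l) e"
  proof cases
    case 1
    then show ?thesis
      by (auto simp: mixed_indices_def)
  next
    case 2
    moreover from 2 have "finite T'" "l \<notin> T'"
      by (auto simp: mixed_indices_def finite_subset)
    ultimately show ?thesis
      by (auto simp: mixed_indices_def)
  qed
qed

lemma sum_mixed_indices_Suc:
  "(\<Sum>T\<in>mixed_indices (Suc l) e. f T)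
    = (\<Sum>T\<in>mixed_indices l (e - 1). f T) + (\<Sum>T\<in>mixed_indices l (e + 1). f (insert l T))"
proof -
  have l: "l \<notin> T" if "T \<in> mixed_indices l e'" for T e'
    using that by (auto simp: mixed_indices_def)
  have "inj_on (insert l) (mixed_indices l (e + 1))"
    by (rule inj_onI) (metis l Diff_insert_absorb)
  moreover have "mixed_indices l (e - 1) \<inter> insert l ` mixed_indices l (e + 1) = {}"
    using l by blast
  ultimately show ?thesis
    unfolding mixed_indices_Suc
    by (simp add: sum.union_disjoint finite_mixed_indices sum.reindex)
qed

definition unmatched :: "nat \<Rightarrow> nat set set \<Rightarrow> nat set" where
  "unmatched l M = {0..<l} - \<Union>M"

definition ordered_indices :: "nat \<Rightarrow> int \<Rightarrow> (nat set set \<times> nat set) set" where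
  "ordered_indices l e = {(M, X). pmatching l M \<and> X \<subseteq> unmatched l M \<and>
     int (card X) - int (card (unmatched l M - X)) = e}"

lemma finite_unmatched [simp]: "finite (unmatched l M)"
  by (simp add: unmatched_def)

lemma unmatched_subset: "unmatched l M \<subseteq> {0..<l}"
  by (auto simp: unmatched_def)

lemma unmatched_Suc: "l \<notin> \<Union>M \<Longrightarrow> unmatched (Suc l) M = insert l (unmatched l M)"
  by (auto simp: unmatched_def)

lemma unmatched_Suc_insert: "k < l \<Longrightarrow> unmatched (Suc l) (insert {k, l} M) = unmatched l M - {k}"
  by (auto simp: unmatched_def)

lemma notin_unmatched [simp]: "l \<notin> unmatched l M"
  by (simp add: unmatched_def)

lemma mem_ordered_indices:
  "(M, X) \<in> ordered_indices l e \<longleftrightarrow>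
     pmatching l M \<and> X \<subseteq> unmatched l M \<and> 2 * int (card X) - int (card (unmatched l M)) = e"
  by (auto simp: ordered_indices_def card_Diff_subset finite_subset of_nat_diff card_mono)

lemma finite_ordered_indices: "finite (ordered_indices l e)"
proof (rule finite_subset)
  show "ordered_indices l e \<subseteq> Pow (Pow {0..<l}) \<times> Pow {0..<l}"
    using pmatching_Union_subset unmatched_subset by (fastforce simp: ordered_indices_def)
qed simp

lemma ordered_indices_disjoint: "z \<in> ordered_indices l e \<Longrightarrow> i \<in> snd z \<Longrightarrow> i \<notin> \<Union>(fst z)"
  by (auto simp: ordered_indices_def unmatched_def)

lemma ordered_indices_notin: "z \<in> ordered_indices l e \<Longrightarrow> l \<notin> snd z \<and> l \<notin> \<Union>(fst z)"
  using pmatching_Union_subset unmatched_subset by (fastforce simp: ordered_indices_def)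

lemma ordered_indices_Suc_last_x:
  "{z \<in> ordered_indices (Suc l) e. l \<in> snd z} = apsnd (insert l) ` ordered_indices l (e - 1)"
proof (intro equalityI subsetI)
  fix z assume "z \<in> {z \<in> ordered_indices (Suc l) e. l \<in> snd z}"
  then obtain M X where z: "z = (M, X)" "(M, X) \<in> ordered_indices (Suc l) e" "l \<in> X"
    by (cases z) auto
  then have M: "pmatching (Suc l) M" and X: "X \<subseteq> unmatched (Suc l) M"
    and deg: "2 * int (card X) - int (card (unmatched (Suc l) M)) = e"
    by (simp_all add: mem_ordered_indices)
  have "l \<notin> \<Union>M"
    using X z(3) by (auto simp: unmatched_def)
  then have U: "unmatched (Suc l) M = insert l (unmatched l M)" and "pmatching l M"
    using M by (simp_all add: unmatched_Suc pmatching_Suc_iff)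
  moreover have "card X = Suc (card (X - {l}))"
    using X z(3) by (meson card.remove finite_subset finite_unmatched)
  ultimately have "(M, X - {l}) \<in> ordered_indices l (e - 1)"
    using X deg by (auto simp: mem_ordered_indices)
  moreover have "z = apsnd (insert l) (M, X - {l})"
    using z by auto
  ultimately show "z \<in> apsnd (insert l) ` ordered_indices l (e - 1)"
    by blast
next
  fix z assume "z \<in> apsnd (insert l) ` ordered_indices l (e - 1)"
  then obtain M X where z: "z = (M, insert l X)" and MX: "(M, X) \<in> ordered_indices l (e - 1)"
    by auto
  then have M: "pmatching l M" and X: "X \<subseteq> unmatched l M"
    and deg: "2 * int (card X) - int (card (unmatched l M)) = e - 1"
    by (simp_all add: mem_ordered_indices)
  have "l \<notin> \<Union>M"
    using pmatching_Union_subset[OF M] by auto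
  then have "unmatched (Suc l) M = insert l (unmatched l M)" "pmatching (Suc l) M"
    using M by (simp_all add: unmatched_Suc pmatching_Suc_iff)
  moreover have "l \<notin> X" "finite X"
    using X by (auto intro: finite_subset[OF _ finite_unmatched])
  ultimately show "z \<in> {z \<in> ordered_indices (Suc l) e. l \<in> snd z}"
    using z X deg by (auto simp: mem_ordered_indices)
qed

lemma ordered_indices_Suc_last_unpaired:
  "{z \<in> ordered_indices (Suc l) e. l \<notin> snd z \<and> l \<notin> \<Union>(fst z)} = ordered_indices l (e + 1)"
proof (intro equalityI subsetI)
  fix z assume "z \<in> {z \<in> ordered_indices (Suc l) e. l \<notin> snd z \<and> l \<notin> \<Union>(fst z)}"
  then obtain M X where z: "z = (M, X)" "(M, X) \<in> ordered_indices (Suc l) e" "l \<notin> X" "l \<notin> \<Union>M"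
    by (cases z) auto
  then have "unmatched (Suc l) M = insert l (unmatched l M)" "pmatching l M"
    by (simp_all add: unmatched_Suc pmatching_Suc_iff mem_ordered_indices)
  then show "z \<in> ordered_indices l (e + 1)"
    using z by (auto simp: mem_ordered_indices)
next
  fix z assume z: "z \<in> ordered_indices l (e + 1)"
  then obtain M X where MX: "z = (M, X)" "pmatching l M"
    by (cases z) (auto simp: mem_ordered_indices)
  have "l \<notin> X" "l \<notin> \<Union>M"
    using ordered_indices_notin[OF z] MX(1) by auto
  then have "unmatched (Suc l) M = insert l (unmatched l M)" "pmatching (Suc l) M"
    using MX(2) by (simp_all add: unmatched_Suc pmatching_Suc_iff)
  then show "z \<in> {z \<in> ordered_indices (Suc l) e. l \<notin> snd z \<and> l \<notin> \<Union>(fst z)}"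
    using z MX(1) \<open>l \<notin> X\<close> \<open>l \<notin> \<Union>M\<close> by (auto simp: mem_ordered_indices)
qed

definition add_pair :: "nat \<Rightarrow> (nat set set \<times> nat set) \<times> nat \<Rightarrow> nat set set \<times> nat set" where
  "add_pair l = (\<lambda>((M, X), k). (insert {k, l} M, X))"

lemma ordered_indices_Suc_last_paired:
  "{z \<in> ordered_indices (Suc l) e. l \<in> \<Union>(fst z)}
    = add_pair l ` (SIGMA z:ordered_indices l (e - 1). unmatched l (fst z) - snd z)"
proof (intro equalityI subsetI)
  fix z assume "z \<in> {z \<in> ordered_indices (Suc l) e. l \<in> \<Union>(fst z)}"
  then obtain M' X where z: "z = (M', X)" "(M', X) \<in> ordered_indices (Suc l) e" "l \<in> \<Union>M'"
    by (cases z) auto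
  then have X: "X \<subseteq> unmatched (Suc l) M'"
    and deg: "2 * int (card X) - int (card (unmatched (Suc l) M')) = e"
    by (simp_all add: mem_ordered_indices)
  obtain k M where M': "M' = insert {k, l} M" "k < l" "k \<notin> \<Union>M" "pmatching l M"
    using z by (auto simp: mem_ordered_indices elim: pmatching_Suc_elim)
  then have U: "unmatched (Suc l) M' = unmatched l M - {k}"
    by (simp add: unmatched_Suc_insert)
  have k: "k \<in> unmatched l M - X"
    using M' X U by (auto simp: unmatched_def)
  then have "card (unmatched l M) = Suc (card (unmatched l M - {k}))"
    by (intro card.remove) auto
  then have "(M, X) \<in> ordered_indices l (e - 1)"
    using M' X U deg by (auto simp: mem_ordered_indices)
  with k have "((M, X), k) \<in> (SIGMA z:ordered_indices l (e - 1). unmatched l (fst z) - snd z)"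
    by simp
  moreover have "z = add_pair l ((M, X), k)"
    using z M' by (simp add: add_pair_def)
  ultimately show "z \<in> add_pair l ` (SIGMA z:ordered_indices l (e - 1). unmatched l (fst z) - snd z)"
    by blast
next
  fix z assume "z \<in> add_pair l ` (SIGMA z:ordered_indices l (e - 1). unmatched l (fst z) - snd z)"
  then obtain M X k where z: "z = (insert {k, l} M, X)" and MX: "(M, X) \<in> ordered_indices l (e - 1)"
    and k: "k \<in> unmatched l M - X"
    by (auto simp: add_pair_def)
  then have M: "pmatching l M" and X: "X \<subseteq> unmatched l M"
    and deg: "2 * int (card X) - int (card (unmatched l M)) = e - 1"
    by (simp_all add: mem_ordered_indices)
  have "k < l" "k \<notin> \<Union>M"
    using k unmatched_subset by (auto simp: unmatched_def)
  then have "pmatching (Suc l) (insert {k, l} M)"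
    and U: "unmatched (Suc l) (insert {k, l} M) = unmatched l M - {k}"
    using M by (simp_all add: pmatching_insert unmatched_Suc_insert)
  moreover have "card (unmatched l M) = Suc (card (unmatched l M - {k}))"
    using k by (intro card.remove) auto
  moreover have "X \<subseteq> unmatched l M - {k}"
    using X k by blast
  ultimately have "(insert {k, l} M, X) \<in> ordered_indices (Suc l) e"
    using deg by (simp add: mem_ordered_indices)
  then show "z \<in> {z \<in> ordered_indices (Suc l) e. l \<in> \<Union>(fst z)}"
    using z by simp
qed

lemma inj_on_add_pair: "inj_on (add_pair l) (SIGMA z:ordered_indices l e. unmatched l (fst z) - snd z)"
proof (rule inj_onI)
  fix w w' assume w: "w \<in> (SIGMA z:ordered_indices l e. unmatched l (fst z) - snd z)"
    and w': "w' \<in> (SIGMA z:ordered_indices l e. unmatched l (fst z) - snd z)"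
    and eq: "add_pair l w = add_pair l w'"
  obtain M X k M' X' k' where ww: "w = ((M, X), k)" "w' = ((M', X'), k')"
    by (metis prod.collapse)
  have mem: "(M, X) \<in> ordered_indices l e" "(M', X') \<in> ordered_indices l e"
    and "k \<in> unmatched l M" "k' \<in> unmatched l M'"
    using w w' ww by auto
  have "l \<notin> \<Union>M" "l \<notin> \<Union>M'"
    using ordered_indices_notin[OF mem(1)] ordered_indices_notin[OF mem(2)] by simp_all
  moreover have "k < l" "k' < l"
    using \<open>k \<in> unmatched l M\<close> \<open>k' \<in> unmatched l M'\<close> unmatched_subset by fastforce+
  moreover have Ins: "insert {k, l} M = insert {k', l} M'" and "X = X'"
    using eq ww by (simp_all add: add_pair_def)
  ultimately have "{k, l} = {k', l}"
    by blast
  then have "k = k'"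
    using \<open>k < l\<close> \<open>k' < l\<close> by (metis doubleton_eq_iff less_irrefl)
  have "M = insert {k, l} M - {{k, l}}"
    using \<open>l \<notin> \<Union>M\<close> by blast
  also have "\<dots> = insert {k', l} M' - {{k', l}}"
    using Ins \<open>k = k'\<close> by simp
  also have "\<dots> = M'"
    using \<open>l \<notin> \<Union>M'\<close> by blast
  finally have "M = M'" .
  then show "w = w'"
    using ww \<open>X = X'\<close> \<open>k = k'\<close> by simp
qed

lemma sum_ordered_indices_Suc:
  "(\<Sum>z\<in>ordered_indices (Suc l) e. f z)
    = (\<Sum>z\<in>ordered_indices l (e - 1). f (apsnd (insert l) z))
      + (\<Sum>z\<in>ordered_indices l (e + 1). f z)
      + (\<Sum>w\<in>(SIGMA z:ordered_indices l (e - 1). unmatched l (fst z) - snd z). f (add_pair l w))"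
proof -
  let ?A = "{z \<in> ordered_indices (Suc l) e. l \<in> snd z}"
  let ?B = "{z \<in> ordered_indices (Suc l) e. l \<notin> snd z \<and> l \<notin> \<Union>(fst z)}"
  let ?C = "{z \<in> ordered_indices (Suc l) e. l \<in> \<Union>(fst z)}"
  have split: "ordered_indices (Suc l) e = ?A \<union> ?B \<union> ?C"
    by blast
  have fin: "finite ?A" "finite ?B" "finite ?C"
    by (simp_all add: finite_ordered_indices)
  have "(?A \<union> ?B) \<inter> ?C = {}"
    using ordered_indices_disjoint[of _ "Suc l" e l] by auto
  then have "sum f (ordered_indices (Suc l) e) = sum f (?A \<union> ?B) + sum f ?C"
    using fin by (subst split, intro sum.union_disjoint) auto
  also have "sum f (?A \<union> ?B) = sum f ?A + sum f ?B"
    using fin by (intro sum.union_disjoint) auto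
  finally have "sum f (ordered_indices (Suc l) e) = sum f ?A + sum f ?B + sum f ?C" .
  moreover have "inj_on (apsnd (insert l)) (ordered_indices l (e - 1))"
  proof (rule inj_onI)
    fix z z' assume "z \<in> ordered_indices l (e - 1)" "z' \<in> ordered_indices l (e - 1)"
      and eq: "apsnd (insert l) z = apsnd (insert l) z'"
    then have "l \<notin> snd z" "l \<notin> snd z'"
      using ordered_indices_notin by blast+
    moreover have "fst z = fst z'" "insert l (snd z) = insert l (snd z')"
      using eq by (metis fst_apsnd, metis snd_apsnd)
    ultimately show "z = z'"
      by (metis Diff_insert_absorb prod.expand)
  qed
  ultimately show ?thesis
    unfolding ordered_indices_Suc_last_x ordered_indices_Suc_last_unpaired ordered_indices_Suc_last_paired
    by (simp add: sum.reindex inj_on_add_pair)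
qed

section \<open>Mixed words and ordered monomials\<close>

definition mixed_word :: "(nat \<Rightarrow> 'a::monoid_mult) \<Rightarrow> (nat \<Rightarrow> 'a) \<Rightarrow> nat list \<Rightarrow> nat set \<Rightarrow> 'a" where
  "mixed_word u v a T = prod_list (map (\<lambda>i. if i \<in> T then v (a ! i) else u (a ! i)) [0..<length a])"

definition mixed_sum :: "(nat \<Rightarrow> 'a::semiring_1) \<Rightarrow> (nat \<Rightarrow> 'a) \<Rightarrow> nat list \<Rightarrow> int \<Rightarrow> 'a" where
  "mixed_sum u v a e = (\<Sum>T\<in>mixed_indices (length a) e. mixed_word u v a T)"

lemma mixed_word_snoc:
  "mixed_word u v (a @ [c]) T = mixed_word u v a T * (if length a \<in> T then v c else u c)"
proof -
  let ?w = "\<lambda>i. if i \<in> T then v ((a @ [c]) ! i) else u ((a @ [c]) ! i)"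
  have "mixed_word u v (a @ [c]) T = prod_list (map ?w [0..<length a]) * ?w (length a)"
    by (simp add: mixed_word_def)
  also have "prod_list (map ?w [0..<length a]) = mixed_word u v a T"
    unfolding mixed_word_def by (intro arg_cong[where f = prod_list] map_cong) (auto simp: nth_append)
  finally show ?thesis
    by simp
qed

lemma mixed_word_insert_length: "mixed_word u v a (insert (length a) T) = mixed_word u v a T"
  unfolding mixed_word_def by (intro arg_cong[where f = prod_list] map_cong) auto

lemma mixed_sum_Nil: "mixed_sum u v [] e = (if e = 0 then 1 else 0)"
proof -
  have "mixed_indices 0 e = (if e = 0 then {{}} else {})"
    by (auto simp: mixed_indices_def)
  then show ?thesis
    by (simp add: mixed_sum_def mixed_word_def)
qed

lemma mixed_sum_snoc:
  "mixed_sum u v (a @ [c]) e = mixed_sum u v a (e - 1) * u c + mixed_sum u v a (e + 1) * v c"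
proof -
  have "length a \<notin> T" if "T \<in> mixed_indices (length a) e'" for T e'
    using that by (auto simp: mixed_indices_def)
  then show ?thesis
    by (simp add: mixed_sum_def sum_mixed_indices_Suc mixed_word_snoc mixed_word_insert_length
        sum_distrib_right)
qed

definition pair_prod :: "(nat \<Rightarrow> nat \<Rightarrow> 'a::monoid_mult) \<Rightarrow> nat list \<Rightarrow> nat set set \<Rightarrow> 'a" where
  "pair_prod g a M = cprod (\<lambda>p. g (a ! Min p) (a ! Max p)) M"

definition ordered_monomial ::
  "(nat \<Rightarrow> nat \<Rightarrow> 'a::monoid_mult) \<Rightarrow> (nat \<Rightarrow> 'a) \<Rightarrow> (nat \<Rightarrow> 'a) \<Rightarrow> nat list
    \<Rightarrow> nat set set \<Rightarrow> nat set \<Rightarrow> 'a"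
  where "ordered_monomial g u v a M X =
    pair_prod g a M * oprod (\<lambda>k. u (a ! k)) X * oprod (\<lambda>k. v (a ! k)) (unmatched (length a) M - X)"

definition ordered_sum ::
  "(nat \<Rightarrow> nat \<Rightarrow> 'a::semiring_1) \<Rightarrow> (nat \<Rightarrow> 'a) \<Rightarrow> (nat \<Rightarrow> 'a) \<Rightarrow> nat list \<Rightarrow> int \<Rightarrow> 'a"
  where "ordered_sum g u v a e =
    (\<Sum>(M, X)\<in>ordered_indices (length a) e. ordered_monomial g u v a M X)"

lemma ordered_sum_Nil: "ordered_sum g u v [] e = (if e = 0 then 1 else 0)"
proof -
  have "pmatching 0 M \<longleftrightarrow> M = {}" for M
    by (auto simp: pmatching_def)
  moreover have "unmatched 0 M = {}" for M
    by (simp add: unmatched_def)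
  ultimately have "ordered_indices 0 e = (if e = 0 then {({}, {})} else {})"
    unfolding ordered_indices_def by auto
  moreover have "ordered_monomial g u v [] {} {} = 1"
    by (simp add: ordered_monomial_def pair_prod_def oprod_def unmatched_def)
  ultimately show ?thesis
    by (simp add: ordered_sum_def)
qed

lemma pair_prod_snoc: "pmatching (length a) M \<Longrightarrow> pair_prod g (a @ [c]) M = pair_prod g a M"
  unfolding pair_prod_def
  by (rule cprod_cong) (auto simp: pmatching_finite nth_append dest: pmatching_Min_Max)

lemma oprod_nth_snoc:
  "X \<subseteq> {0..<length a} \<Longrightarrow> oprod (\<lambda>k. f ((a @ [c]) ! k)) X = oprod (\<lambda>k. f (a ! k)) X"
  by (rule oprod_cong) (auto simp: nth_append intro: finite_subset)

lemma oprod_nth_snoc_insert_length: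
  assumes "X \<subseteq> {0..<length a}"
  shows "oprod (\<lambda>k. f ((a @ [c]) ! k)) (insert (length a) X) = oprod (\<lambda>k. f (a ! k)) X * f c"
proof -
  have "finite X"
    using assms finite_subset by blast
  then have "oprod (\<lambda>k. f ((a @ [c]) ! k)) (insert (length a) X)
      = oprod (\<lambda>k. f ((a @ [c]) ! k)) X * f c"
    using assms by (subst oprod_insert_greatest) auto
  then show ?thesis
    using assms by (simp add: oprod_nth_snoc)
qed

lemma ordered_monomial_snoc_last_x:
  assumes "(M, X) \<in> ordered_indices (length a) e"
  shows "ordered_monomial g u v (a @ [c]) M (insert (length a) X)
    = pair_prod g a M * oprod (\<lambda>k. u (a ! k)) X * u c * oprod (\<lambda>k. v (a ! k)) (unmatched (length a) M - X)"
proof -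
  have M: "pmatching (length a) M" and X: "X \<subseteq> unmatched (length a) M"
    using assms by (simp_all add: mem_ordered_indices)
  have "length a \<notin> \<Union>M"
    using ordered_indices_notin[OF assms] by simp
  then have "unmatched (Suc (length a)) M - insert (length a) X = unmatched (length a) M - X"
    by (auto simp: unmatched_Suc)
  moreover have "X \<subseteq> {0..<length a}" "unmatched (length a) M - X \<subseteq> {0..<length a}"
    using X unmatched_subset by blast+
  ultimately show ?thesis
    using M by (simp add: ordered_monomial_def pair_prod_snoc oprod_nth_snoc_insert_length oprod_nth_snoc
        mult.assoc)
qed

lemma ordered_monomial_snoc_last_unpaired:
  assumes "(M, X) \<in> ordered_indices (length a) e"
  shows "ordered_monomial g u v (a @ [c]) M X = ordered_monomial g u v a M X * v c"
proof -
  have M: "pmatching (length a) M" and X: "X \<subseteq> unmatched (length a) M"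
    using assms by (simp_all add: mem_ordered_indices)
  have "length a \<notin> \<Union>M" "length a \<notin> X"
    using ordered_indices_notin[OF assms] by simp_all
  then have "unmatched (Suc (length a)) M - X = insert (length a) (unmatched (length a) M - X)"
    by (auto simp: unmatched_Suc)
  moreover have "X \<subseteq> {0..<length a}" "unmatched (length a) M - X \<subseteq> {0..<length a}"
    using X unmatched_subset by blast+
  ultimately show ?thesis
    using M by (simp add: ordered_monomial_def pair_prod_snoc oprod_nth_snoc_insert_length oprod_nth_snoc
        mult.assoc)
qed

section \<open>The Wick recursion\<close>

locale wick_contraction =
  fixes I :: "nat set" and g :: "nat \<Rightarrow> nat \<Rightarrow> 'a::ring_1" and u v :: "nat \<Rightarrow> 'a"
  assumes contraction_commute:
      "i \<in> I \<Longrightarrow> j \<in> I \<Longrightarrow> i' \<in> I \<Longrightarrow> j' \<in> I \<Longrightarrow> g i j * g i' j' = g i' j' * g i j"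
    and contraction_commute_u: "i \<in> I \<Longrightarrow> j \<in> I \<Longrightarrow> k \<in> I \<Longrightarrow> g i j * u k = u k * g i j"
    and contraction_commute_v: "i \<in> I \<Longrightarrow> j \<in> I \<Longrightarrow> k \<in> I \<Longrightarrow> g i j * v k = v k * g i j"
    and v_u_commutator: "i \<in> I \<Longrightarrow> k \<in> I \<Longrightarrow> v i * u k = u k * v i + g i k"
begin

lemma ordered_monomial_snoc_last_paired:
  assumes a: "set a \<subseteq> I" and c: "c \<in> I"
    and MX: "(M, X) \<in> ordered_indices (length a) e" and k: "k \<in> unmatched (length a) M - X"
  shows "ordered_monomial g u v (a @ [c]) (insert {k, length a} M) X
    = pair_prod g a M * oprod (\<lambda>j. u (a ! j)) X
      * (g (a ! k) c * oprod (\<lambda>j. v (a ! j)) (unmatched (length a) M - X - {k}))"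
proof -
  let ?l = "length a"
  have M: "pmatching ?l M" and X: "X \<subseteq> unmatched ?l M"
    using MX by (simp_all add: mem_ordered_indices)
  have kl: "k < ?l" "k \<notin> \<Union>M" "?l \<notin> \<Union>M"
    using k unmatched_subset ordered_indices_notin[OF MX] by (auto simp: unmatched_def)
  have ai: "a ! j \<in> I" if "j < ?l" for j
    using that a nth_mem by blast
  have Xl: "X \<subseteq> {0..<?l}" "unmatched ?l M - X - {k} \<subseteq> {0..<?l}"
    using X unmatched_subset by blast+
  have aM: "a ! Min p \<in> I" "a ! Max p \<in> I" if "p \<in> M" for p
    using a pmatching_Min_Max[OF M that] by auto
  have "pair_prod g (a @ [c]) (insert {k, ?l} M)
      = g ((a @ [c]) ! Min {k, ?l}) ((a @ [c]) ! Max {k, ?l}) * pair_prod g (a @ [c]) M"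
    unfolding pair_prod_def
  proof (rule cprod_insert)
    show "finite M" "{k, ?l} \<notin> M"
      using M kl by (auto simp: pmatching_finite)
    have pm: "pmatching (Suc ?l) (insert {k, ?l} M)"
      using M kl by (simp add: pmatching_insert)
    have ac: "(a @ [c]) ! i \<in> I" if "i < Suc ?l" for i
      using that a c nth_mem[of i "a @ [c]"] by auto
    have mm: "(a @ [c]) ! Min p \<in> I \<and> (a @ [c]) ! Max p \<in> I" if "p \<in> insert {k, ?l} M" for p
      using pmatching_Min_Max[OF pm that] ac by simp
    show "g ((a @ [c]) ! Min p) ((a @ [c]) ! Max p) * g ((a @ [c]) ! Min q) ((a @ [c]) ! Max q)
        = g ((a @ [c]) ! Min q) ((a @ [c]) ! Max q) * g ((a @ [c]) ! Min p) ((a @ [c]) ! Max p)"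
      if "p \<in> insert {k, ?l} M" "q \<in> insert {k, ?l} M" for p q
      using mm[OF that(1)] mm[OF that(2)] by (intro contraction_commute) simp_all
  qed
  also have "\<dots> = g (a ! k) c * pair_prod g a M"
    using kl M by (simp add: pair_prod_snoc nth_append)
  finally have pair: "pair_prod g (a @ [c]) (insert {k, ?l} M) = g (a ! k) c * pair_prod g a M" .
  have "g (a ! k) c * pair_prod g a M = pair_prod g a M * g (a ! k) c"
    unfolding pair_prod_def
    by (rule cprod_commute) (use M aM ai[OF kl(1)] c contraction_commute in \<open>auto simp: pmatching_finite\<close>)
  moreover have "g (a ! k) c * oprod (\<lambda>j. u (a ! j)) X = oprod (\<lambda>j. u (a ! j)) X * g (a ! k) c"
  proof (rule oprod_commute)
    show "finite X"
      using Xl(1) finite_subset by blast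
    show "g (a ! k) c * u (a ! j) = u (a ! j) * g (a ! k) c" if "j \<in> X" for j
      using that Xl(1) kl(1) c by (intro contraction_commute_u ai) auto
  qed
  moreover have "unmatched (Suc ?l) (insert {k, ?l} M) - X = unmatched ?l M - X - {k}"
    using kl by (auto simp: unmatched_Suc_insert)
  ultimately show ?thesis
    using pair Xl by (simp add: ordered_monomial_def oprod_nth_snoc mult.assoc)
qed

lemma ordered_monomial_mult_u:
  assumes a: "set a \<subseteq> I" and c: "c \<in> I"
  shows "ordered_monomial g u v a M X * u c
    = pair_prod g a M * oprod (\<lambda>j. u (a ! j)) X * u c * oprod (\<lambda>j. v (a ! j)) (unmatched (length a) M - X)
      + (\<Sum>k\<in>unmatched (length a) M - X. pair_prod g a M * oprod (\<lambda>j. u (a ! j)) X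
          * (g (a ! k) c * oprod (\<lambda>j. v (a ! j)) (unmatched (length a) M - X - {k})))"
proof -
  let ?V = "unmatched (length a) M - X"
  have ai: "a ! j \<in> I" if "j \<in> ?V" for j
    using that a unmatched_subset nth_mem by fastforce
  have "oprod (\<lambda>j. v (a ! j)) ?V * u c
      = u c * oprod (\<lambda>j. v (a ! j)) ?V + (\<Sum>k\<in>?V. g (a ! k) c * oprod (\<lambda>j. v (a ! j)) (?V - {k}))"
  proof (rule oprod_mult_commutator)
    show "v (a ! k) * u c = u c * v (a ! k) + g (a ! k) c" if "k \<in> ?V" for k
      using that c by (intro v_u_commutator ai)
    show "g (a ! k) c * v (a ! j) = v (a ! j) * g (a ! k) c" if "k \<in> ?V" "j \<in> ?V" for k j
      using that c by (intro contraction_commute_v ai)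
  qed simp
  then show ?thesis
    unfolding ordered_monomial_def by (simp add: mult.assoc distrib_left sum_distrib_left)
qed

lemma ordered_sum_snoc:
  assumes a: "set a \<subseteq> I" and c: "c \<in> I"
  shows "ordered_sum g u v (a @ [c]) e
    = ordered_sum g u v a (e - 1) * u c + ordered_sum g u v a (e + 1) * v c"
proof -
  let ?l = "length a"
  let ?P = "SIGMA z:ordered_indices ?l (e - 1). unmatched ?l (fst z) - snd z"
  define x_term where "x_term = (\<lambda>(M, X). pair_prod g a M * oprod (\<lambda>j. u (a ! j)) X * u c
      * oprod (\<lambda>j. v (a ! j)) (unmatched ?l M - X))"
  define pair_term where "pair_term = (\<lambda>((M, X), k). pair_prod g a M * oprod (\<lambda>j. u (a ! j)) X
      * (g (a ! k) c * oprod (\<lambda>j. v (a ! j)) (unmatched ?l M - X - {k})))"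
  let ?f = "\<lambda>z. ordered_monomial g u v (a @ [c]) (fst z) (snd z)"
  have "ordered_sum g u v (a @ [c]) e
      = (\<Sum>z\<in>ordered_indices ?l (e - 1). ?f (apsnd (insert ?l) z))
        + (\<Sum>z\<in>ordered_indices ?l (e + 1). ?f z) + (\<Sum>w\<in>?P. ?f (add_pair ?l w))"
    unfolding ordered_sum_def by (simp add: split_beta sum_ordered_indices_Suc)
  also have "(\<Sum>z\<in>ordered_indices ?l (e - 1). ?f (apsnd (insert ?l) z))
      = (\<Sum>z\<in>ordered_indices ?l (e - 1). x_term z)"
    by (rule sum.cong) (auto simp: x_term_def ordered_monomial_snoc_last_x)
  also have "(\<Sum>z\<in>ordered_indices ?l (e + 1). ?f z) = ordered_sum g u v a (e + 1) * v c"
    by (simp add: ordered_sum_def split_beta sum_distrib_right ordered_monomial_snoc_last_unpaired)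
  also have "(\<Sum>w\<in>?P. ?f (add_pair ?l w)) = (\<Sum>w\<in>?P. pair_term w)"
    using a c
    by (intro sum.cong) (auto simp: pair_term_def add_pair_def ordered_monomial_snoc_last_paired)
  finally have snoc: "ordered_sum g u v (a @ [c]) e
      = (\<Sum>z\<in>ordered_indices ?l (e - 1). x_term z) + ordered_sum g u v a (e + 1) * v c
        + (\<Sum>w\<in>?P. pair_term w)" .
  have "ordered_sum g u v a (e - 1) * u c
      = (\<Sum>z\<in>ordered_indices ?l (e - 1).
          x_term z + (\<Sum>k\<in>unmatched ?l (fst z) - snd z. pair_term (z, k)))"
    using a c
    by (simp add: ordered_sum_def split_beta sum_distrib_right ordered_monomial_mult_u
        x_term_def pair_term_def)
  also have "\<dots> = (\<Sum>z\<in>ordered_indices ?l (e - 1). x_term z) + (\<Sum>w\<in>?P. pair_term w)"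
    by (simp add: sum.distrib sum.Sigma finite_ordered_indices)
  finally show ?thesis
    using snoc by (simp add: algebra_simps)
qed

theorem mixed_sum_eq_ordered_sum: "set a \<subseteq> I \<Longrightarrow> mixed_sum u v a e = ordered_sum g u v a e"
proof (induction a arbitrary: e rule: rev_induct)
  case Nil
  then show ?case
    by (simp add: mixed_sum_Nil ordered_sum_Nil)
next
  case (snoc c a)
  then show ?case
    by (simp add: mixed_sum_snoc ordered_sum_snoc)
qed

end

section \<open>The Weyl algebra\<close>

lemma weyl_rels_wick_contraction:
  assumes "weyl_rels n x dl etalo etaup"
  shows "wick_contraction {1..n} etaup x (dup n dl etaup)"
proof -
  let ?N = "{1..n}"
  have eta_x: "etaup i j * x k = x k * etaup i j"
    and eta_dl: "etaup i j * dl k = dl k * etaup i j"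
    and eta_eta: "etaup i j * etaup k m = etaup k m * etaup i j"
    and dl_x: "dl k * x m = x m * dl k + (if k = m then 1 else 0)"
    if "i \<in> ?N" "j \<in> ?N" "k \<in> ?N" "m \<in> ?N" for i j k m
    using assms that unfolding weyl_rels_def by (auto simp: algebra_simps)
  show ?thesis
  proof
    fix i j k assume ijk: "i \<in> ?N" "j \<in> ?N" "k \<in> ?N"
    show "etaup i j * x k = x k * etaup i j"
      using eta_x ijk by blast
    have "etaup i j * (etaup k b * dl b) = (etaup k b * dl b) * etaup i j" if "b \<in> ?N" for b
      using eta_eta[OF ijk that] eta_dl[OF ijk(1,2) that that]
      by (metis mult.assoc)
    then show "etaup i j * dup n dl etaup k = dup n dl etaup k * etaup i j"
      unfolding dup_def by (simp add: sum_distrib_left sum_distrib_right)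
  next
    fix i j i' j' assume "i \<in> ?N" "j \<in> ?N" "i' \<in> ?N" "j' \<in> ?N"
    then show "etaup i j * etaup i' j' = etaup i' j' * etaup i j"
      using eta_eta by blast
  next
    fix i k assume ik: "i \<in> ?N" "k \<in> ?N"
    have "etaup i b * (dl b * x k) = x k * (etaup i b * dl b) + (if b = k then etaup i b else 0)"
      if "b \<in> ?N" for b
      using dl_x[OF ik(1) ik(1) that ik(2)] eta_x[OF ik(1) that ik(2) ik(2)]
      by (simp add: distrib_left mult.assoc[symmetric])
    then have "dup n dl etaup i * x k
        = (\<Sum>b\<in>?N. x k * (etaup i b * dl b) + (if b = k then etaup i b else 0))"
      unfolding dup_def by (simp add: sum_distrib_right mult.assoc)
    also have "\<dots> = x k * dup n dl etaup i + etaup i k"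
      using ik(2) by (simp add: sum.distrib sum_distrib_left dup_def)
    finally show "dup n dl etaup i * x k = x k * dup n dl etaup i + etaup i k" .
  qed
qed

theorem mainTheorem5:
  fixes n d :: nat and a :: "nat list"
    and x dl :: "nat \<Rightarrow> 'a::ring_1" and etalo etaup :: "nat \<Rightarrow> nat \<Rightarrow> 'a"
  assumes "weyl_rels n x dl etalo etaup"
    and "set a \<subseteq> {1..n}"
  shows "sum_i n x dl etaup a d = sum_ii n x dl etaup a d"
proof -
  interpret wick_contraction "{1..n}" etaup x "dup n dl etaup"
    using assms(1) by (rule weyl_rels_wick_contraction)
  have "sum_i n x dl etaup a d = mixed_sum x (dup n dl etaup) a (int d)"
    by (simp add: sum_i_def mixed_sum_def mixed_indices_def mixed_word_def)
  also have "\<dots> = ordered_sum etaup x (dup n dl etaup) a (int d)"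
    using assms(2) by (rule mixed_sum_eq_ordered_sum)
  also have "\<dots> = sum_ii n x dl etaup a d"
    by (simp add: sum_ii_def ordered_sum_def ordered_indices_def ordered_monomial_def pair_prod_def
        unmatched_def)
  finally show ?thesis .
qed

end
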